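(* Let $A,B\in\mathbb{R}_+^{n\times n}$ be two circulant matrices such that $\lambda(A)=\lambda(B)$ and $A\leq B$ (entrywise). Then $\mathrm{Attr}(A)\subseteq\mathrm{Attr}(B)$.
   Context: Max algebra: on $\mathbb{R}_+=[0,\infty)$ use $a\oplus b=\max(a,b)$ and ordinary multiplication; for nonnegative matrices $(A\otimes B)_{i,k}=\max_j A_{i,j}B_{j,k}$, and $A^t$ denotes the $t$-th max-algebraic power. A value $\lambda\in\mathbb{R}_+$ is a (max-algebraic) eigenvalue of $A\in\mathbb{R}_+^{n\times n}$ if $A\otimes x=\lambda x$ for some nonzero $x\in\mathbb{R}_+^n$; $\lambda(A)$ denotes the greatest eigenvalue, which equals the maximum cycle geometric mean $\max_{k=1}^n\max_{i_1,\dots,i_k}(A_{i_1,i_2}A_{i_2,i_3}\cdots A_{i_k,i_1})^{1/k}$. The eigencone is $V(A,\lambda)=\{x\in\mathbb{R}_+^n: A\otimes x=\lambda x\}$, and the attraction cone is $\mathrm{Attr}(A)=\{x\in\mathbb{R}_+^n:\ A^t\otimes x\in V(A,\lambda(A))\text{ for some }t\ge 0\}$ (with $A^0=I$). A matrix $A\in\mathbb{R}_+^{n\times n}$ is circulant, written $A=\mathrm{Circ}(a_0,\dots,a_{n-1})$, if $A_{i,j}=a_t$ whenever $t\in\{0,\dots,n-1\}$ and $t\equiv j-i \pmod n$. *)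

theory Defs
  imports Complex_Main
begin

(* n x n nonnegative matrices are represented as functions nat => nat => real
   (entries indexed by 0..n-1); vectors as functions nat => real that vanish
   outside {0..<n}. *)

definition nonneg_mat :: "nat \<Rightarrow> (nat \<Rightarrow> nat \<Rightarrow> real) \<Rightarrow> bool" where
  "nonneg_mat n A \<longleftrightarrow> (\<forall>i<n. \<forall>j<n. 0 \<le> A i j)"

definition vecs :: "nat \<Rightarrow> (nat \<Rightarrow> real) set" where
  "vecs n = {x. (\<forall>i<n. 0 \<le> x i) \<and> (\<forall>i\<ge>n. x i = 0)}"

definition mmult :: "nat \<Rightarrow> (nat \<Rightarrow> nat \<Rightarrow> real) \<Rightarrow> (nat \<Rightarrow> nat \<Rightarrow> real) \<Rightarrow> nat \<Rightarrow> nat \<Rightarrow> real" where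
  "mmult n A B = (\<lambda>i k. if i < n \<and> k < n then Max ((\<lambda>j. A i j * B j k) ` {..<n}) else 0)"

definition mid :: "nat \<Rightarrow> nat \<Rightarrow> nat \<Rightarrow> real" where
  "mid n = (\<lambda>i j. if i < n \<and> i = j then 1 else 0)"

fun mpow :: "nat \<Rightarrow> (nat \<Rightarrow> nat \<Rightarrow> real) \<Rightarrow> nat \<Rightarrow> nat \<Rightarrow> nat \<Rightarrow> real" where
  "mpow n A 0 = mid n"
| "mpow n A (Suc t) = mmult n A (mpow n A t)"

definition mvec :: "nat \<Rightarrow> (nat \<Rightarrow> nat \<Rightarrow> real) \<Rightarrow> (nat \<Rightarrow> real) \<Rightarrow> nat \<Rightarrow> real" where
  "mvec n A x = (\<lambda>i. if i < n then Max ((\<lambda>j. A i j * x j) ` {..<n}) else 0)"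

definition eigencone :: "nat \<Rightarrow> (nat \<Rightarrow> nat \<Rightarrow> real) \<Rightarrow> real \<Rightarrow> (nat \<Rightarrow> real) set" where
  "eigencone n A l = {x \<in> vecs n. mvec n A x = (\<lambda>i. l * x i)}"

definition is_eigenvalue :: "nat \<Rightarrow> (nat \<Rightarrow> nat \<Rightarrow> real) \<Rightarrow> real \<Rightarrow> bool" where
  "is_eigenvalue n A l \<longleftrightarrow> 0 \<le> l \<and> (\<exists>x \<in> eigencone n A l. \<exists>i<n. x i \<noteq> 0)"

definition lam :: "nat \<Rightarrow> (nat \<Rightarrow> nat \<Rightarrow> real) \<Rightarrow> real" where
  "lam n A = (GREATEST l. is_eigenvalue n A l)"

definition Attr :: "nat \<Rightarrow> (nat \<Rightarrow> nat \<Rightarrow> real) \<Rightarrow> (nat \<Rightarrow> real) set" where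
  "Attr n A = {x \<in> vecs n. \<exists>t. mvec n (mpow n A t) x \<in> eigencone n A (lam n A)}"

definition circulant :: "nat \<Rightarrow> (nat \<Rightarrow> nat \<Rightarrow> real) \<Rightarrow> bool" where
  "circulant n A \<longleftrightarrow> (\<exists>a :: nat \<Rightarrow> real. \<forall>i<n. \<forall>j<n. \<forall>t<n.
      int t mod int n = (int j - int i) mod int n \<longrightarrow> A i j = a t)"

end

theory Submission
  imports Defs "HOL-Number_Theory.Cong"
begin

text \<open>A circulant matrix \<open>Circ(c)\<close> acts by \<open>(Circ(c) \<otimes> x)\<^sub>i = max\<^sub>s c\<^sub>s x\<^sub>i\<^sub>+\<^sub>s\<close>
  (indices mod \<open>n\<close>); hence circulants commute and \<open>\<lambda>(Circ(c)) = max\<^sub>s c\<^sub>s\<close>.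
  Write \<open>B = A \<oplus> D\<close>, where \<open>D\<close> keeps the entries in which \<open>B\<close> exceeds \<open>A\<close>; by
  commutativity \<open>B\<^sup>t \<otimes> x\<close> is the maximum of the terms \<open>A\<^sup>t\<^sup>-\<^sup>k D\<^sup>k \<otimes> x\<close>.
  A product of \<open>n\<close> entries of \<open>D\<close> along a path contains, by pigeonhole, a segment of some length
  \<open>r\<close> whose displacement equals that of \<open>r\<close> steps along a maximal entry \<open>a\<^sub>s\<^sub>0 = \<lambda>\<close> of \<open>A\<close>;
  replacing the segment by these steps does not decrease the weight. So high powers of \<open>D\<close> can be
  traded for powers of \<open>A\<close>, and for \<open>t \<ge> T + n\<close> the terms with \<open>t - k \<ge> T\<close> dominate. If
  \<open>A\<^sup>T \<otimes> x\<close> is an eigenvector, these terms are eigenvectors, which forces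
  \<open>B\<^sup>t\<^sup>+\<^sup>1 \<otimes> x = \<lambda> B\<^sup>t \<otimes> x\<close>.\<close>

section \<open>Max-times action of circulant matrices\<close>

definition circ_apply :: "nat \<Rightarrow> (nat \<Rightarrow> real) \<Rightarrow> (nat \<Rightarrow> real) \<Rightarrow> nat \<Rightarrow> real" where
  "circ_apply n c w = (\<lambda>i. if i < n then Max ((\<lambda>s. c s * w ((i + s) mod n)) ` {..<n}) else 0)"

lemma circ_apply_ge:
  "i < n \<Longrightarrow> s < n \<Longrightarrow> c s * w ((i + s) mod n) \<le> circ_apply n c w i"
  unfolding circ_apply_def by (auto intro: Max_ge)

lemma circ_apply_attained:
  assumes "i < n"
  obtains s where "s < n" "circ_apply n c w i = c s * w ((i + s) mod n)"
proof -
  have "Max ((\<lambda>s. c s * w ((i + s) mod n)) ` {..<n}) \<in> (\<lambda>s. c s * w ((i + s) mod n)) ` {..<n}"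
    using assms by (intro Max_in) auto
  then show ?thesis using assms that unfolding circ_apply_def by auto
qed

lemma circ_apply_outside: "\<not> i < n \<Longrightarrow> circ_apply n c w i = 0"
  unfolding circ_apply_def by simp

lemma vecs_nonneg: "x \<in> vecs n \<Longrightarrow> 0 \<le> x i"
  unfolding vecs_def by (cases "i < n") auto

lemma vecs_outside: "x \<in> vecs n \<Longrightarrow> \<not> i < n \<Longrightarrow> x i = 0"
  unfolding vecs_def by auto

lemma circ_apply_vecs:
  assumes c: "\<forall>s<n. 0 \<le> c s" and w: "w \<in> vecs n"
  shows "circ_apply n c w \<in> vecs n"
  unfolding vecs_def
proof (intro CollectI conjI allI impI)
  fix i assume i: "i < n"
  have "0 \<le> c 0 * w ((i + 0) mod n)" using c w i by (simp add: vecs_nonneg)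
  also have "\<dots> \<le> circ_apply n c w i" using i by (intro circ_apply_ge) auto
  finally show "0 \<le> circ_apply n c w i" .
qed (simp add: circ_apply_outside)

lemma circ_pow_vecs:
  "\<forall>s<n. 0 \<le> c s \<Longrightarrow> w \<in> vecs n \<Longrightarrow> (circ_apply n c ^^ k) w \<in> vecs n"
  by (induction k) (auto simp: circ_apply_vecs)

lemma circ_apply_mono:
  assumes "\<forall>s<n. 0 \<le> c s" "\<forall>s<n. c s \<le> c' s" "\<And>j. w j \<le> w' j" "w \<in> vecs n"
  shows "circ_apply n c w i \<le> circ_apply n c' w' i"
proof (cases "i < n")
  case True
  then obtain s where s: "s < n" "circ_apply n c w i = c s * w ((i + s) mod n)"
    by (rule circ_apply_attained)
  have "c s * w ((i + s) mod n) \<le> c' s * w' ((i + s) mod n)"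
    using assms s by (intro mult_mono) (auto simp: vecs_nonneg intro: order_trans)
  also have "\<dots> \<le> circ_apply n c' w' i" using True s by (intro circ_apply_ge)
  finally show ?thesis using s by simp
qed (simp add: circ_apply_outside)

lemma circ_pow_mono:
  assumes "\<forall>s<n. 0 \<le> c s" "\<forall>s<n. c s \<le> c' s" "\<And>j. w j \<le> w' j" "w \<in> vecs n"
  shows "(circ_apply n c ^^ k) w i \<le> (circ_apply n c' ^^ k) w' i"
  using assms(3)
proof (induction k arbitrary: i)
  case (Suc k)
  then show ?case by (auto intro!: circ_apply_mono assms circ_pow_vecs)
qed simp

lemma circ_apply_scale:
  assumes l: "0 \<le> l" and c: "\<forall>s<n. 0 \<le> c s"
  shows "circ_apply n c (\<lambda>j. l * w j) = (\<lambda>i. l * circ_apply n c w i)"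
proof
  fix i show "circ_apply n c (\<lambda>j. l * w j) i = l * circ_apply n c w i"
  proof (cases "i < n")
    case True
    obtain s where s: "s < n" "circ_apply n c (\<lambda>j. l * w j) i = c s * (l * w ((i + s) mod n))"
      using True by (rule circ_apply_attained)
    obtain u where u: "u < n" "circ_apply n c w i = c u * w ((i + u) mod n)"
      using True by (rule circ_apply_attained)
    have "c s * (l * w ((i + s) mod n)) = l * (c s * w ((i + s) mod n))" by simp
    also have "\<dots> \<le> l * circ_apply n c w i"
      using l True s by (intro mult_left_mono circ_apply_ge) auto
    finally have le: "circ_apply n c (\<lambda>j. l * w j) i \<le> l * circ_apply n c w i" using s by simp
    have "l * circ_apply n c w i = c u * (l * w ((i + u) mod n))" using u by simp
    also have "\<dots> \<le> circ_apply n c (\<lambda>j. l * w j) i"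
      using circ_apply_ge[OF True u(1), of c "\<lambda>j. l * w j"] by simp
    finally show ?thesis using le by simp
  qed (simp add: circ_apply_outside)
qed

lemma circ_pow_scale:
  assumes "0 \<le> l" "\<forall>s<n. 0 \<le> c s"
  shows "(circ_apply n c ^^ k) (\<lambda>j. l * w j) = (\<lambda>i. l * (circ_apply n c ^^ k) w i)"
  by (induction k) (simp_all add: circ_apply_scale assms)

lemma circ_apply_commute_le:
  assumes a: "\<forall>s<n. 0 \<le> a s" and d: "\<forall>s<n. 0 \<le> d s" and z: "z \<in> vecs n" and i: "i < n"
  shows "circ_apply n a (circ_apply n d z) i \<le> circ_apply n d (circ_apply n a z) i"
proof -
  obtain s where s: "s < n" "circ_apply n a (circ_apply n d z) i = a s * circ_apply n d z ((i + s) mod n)"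
    using i by (rule circ_apply_attained)
  have j: "(i + s) mod n < n" using i by simp
  obtain u where u: "u < n"
      "circ_apply n d z ((i + s) mod n) = d u * z (((i + s) mod n + u) mod n)"
    using j by (rule circ_apply_attained)
  have "((i + s) mod n + u) mod n = ((i + u) mod n + s) mod n"
    by (metis add.commute add.left_commute mod_add_right_eq)
  then have "a s * circ_apply n d z ((i + s) mod n) = d u * (a s * z (((i + u) mod n + s) mod n))"
    using u by simp
  also have "\<dots> \<le> d u * circ_apply n a z ((i + u) mod n)"
    using a d i s u by (intro mult_left_mono circ_apply_ge) auto
  also have "\<dots> \<le> circ_apply n d (circ_apply n a z) i" using i u by (intro circ_apply_ge) auto
  finally show ?thesis using s by simp
qed

lemma circ_apply_commute:
  assumes "\<forall>s<n. 0 \<le> a s" "\<forall>s<n. 0 \<le> d s" "z \<in> vecs n"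
  shows "circ_apply n a (circ_apply n d z) = circ_apply n d (circ_apply n a z)"
proof
  fix i show "circ_apply n a (circ_apply n d z) i = circ_apply n d (circ_apply n a z) i"
    using circ_apply_commute_le[OF assms] circ_apply_commute_le[OF assms(2,1,3)]
    by (cases "i < n") (auto simp: circ_apply_outside intro: antisym)
qed

lemma circ_pow_commute_apply:
  assumes "\<forall>s<n. 0 \<le> a s" "\<forall>s<n. 0 \<le> d s" "z \<in> vecs n"
  shows "(circ_apply n a ^^ m) (circ_apply n d z) = circ_apply n d ((circ_apply n a ^^ m) z)"
  by (induction m) (simp_all add: circ_apply_commute assms circ_pow_vecs)

lemma circ_pow_commute:
  assumes "\<forall>s<n. 0 \<le> a s" "\<forall>s<n. 0 \<le> d s" "z \<in> vecs n"
  shows "(circ_apply n a ^^ m) ((circ_apply n d ^^ k) z) = (circ_apply n d ^^ k) ((circ_apply n a ^^ m) z)"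
  by (induction k) (simp_all add: circ_pow_commute_apply assms circ_pow_vecs)

section \<open>Weights of paths\<close>

context comm_monoid_set
begin

lemma lessThan_remove_segment:
  fixes g :: "nat \<Rightarrow> 'a"
  assumes "a \<le> b" "b \<le> n"
  shows "F g {..<n} = F g {a..<b} \<^bold>* F (\<lambda>l. g (if l < a then l else l + (b - a))) {..<n - (b - a)}"
proof -
  let ?g' = "\<lambda>l. g (if l < a then l else l + (b - a))"
  have "F g {..<n} = F g {0..<a} \<^bold>* (F g {a..<b} \<^bold>* F g {b..<n})"
    using assms by (simp add: atLeastLessThan_concat atLeast0LessThan[symmetric])
  moreover have "F ?g' {..<n - (b - a)} = F g {0..<a} \<^bold>* F g {b..<n}"
  proof -
    have "F ?g' {..<n - (b - a)} = F ?g' {0..<a} \<^bold>* F ?g' {a..<n - (b - a)}"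
      unfolding lessThan_atLeast0 using assms by (intro atLeastLessThan_concat[symmetric]) auto
    moreover have "F ?g' {0..<a} = F g {0..<a}" by (rule cong) auto
    moreover have "F ?g' {a..<n - (b - a)} = F (\<lambda>l. g (l + (b - a))) {a..<n - (b - a)}"
      by (rule cong) auto
    moreover have "\<dots> = F g {b..<n}"
      using shift_bounds_nat_ivl[of g a "b - a" "n - (b - a)"] assms by simp
    ultimately show ?thesis by simp
  qed
  ultimately show ?thesis by (simp add: ac_simps)
qed

end

lemma exists_segment_sum_cong:
  fixes s :: "nat \<Rightarrow> nat"
  assumes "0 < n" "c < n"
  obtains a b where "a < b" "b \<le> n" "[(\<Sum>l\<in>{a..<b}. s l) = (b - a) * c] (mod n)"
proof -
  \<comment> \<open>\<open>k * (n - c)\<close> stands for \<open>- k * c\<close> modulo \<open>n\<close>\<close>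
  define q where "q k = ((\<Sum>l<k. s l) + k * (n - c)) mod n" for k
  have "\<not> inj_on q {..n}"
  proof
    assume "inj_on q {..n}"
    moreover have "q ` {..n} \<subseteq> {..<n}" using assms by (auto simp: q_def)
    ultimately have "card {..n} \<le> card {..<n}" by (intro card_inj_on_le) auto
    then show False by simp
  qed
  then obtain u v where uv: "u \<le> n" "v \<le> n" "u \<noteq> v" "q u = q v"
    unfolding inj_on_def by auto
  define a where "a = min u v"
  define b where "b = max u v"
  have ab: "a < b" "b \<le> n" "q a = q b" using uv unfolding a_def b_def by auto
  define S where "S = (\<Sum>l\<in>{a..<b}. s l)"
  define C where "C = (\<Sum>l<a. s l) + a * (n - c)"
  have "(\<Sum>l<b. s l) = (\<Sum>l<a. s l) + S"
    using ab by (simp add: S_def lessThan_atLeast0 sum.atLeastLessThan_concat)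
  moreover have "b * (n - c) = a * (n - c) + (b - a) * (n - c)"
    using ab by (simp add: add_mult_distrib[symmetric])
  ultimately have "C + (S + (b - a) * (n - c)) = (\<Sum>l<b. s l) + b * (n - c)"
    by (simp add: C_def)
  then have "[C + (S + (b - a) * (n - c)) = C] (mod n)"
    using ab by (simp add: q_def C_def cong_def)
  then have "[C + (S + (b - a) * (n - c)) + (b - a) * c = C + (b - a) * c] (mod n)"
    by (rule cong_add) simp
  moreover have "(b - a) * (n - c) + (b - a) * c = (b - a) * n"
    using assms by (simp add: diff_mult_distrib2)
  moreover have "(C + S + (b - a) * n) mod n = (C + S) mod n" by simp
  ultimately have "[C + S = C + (b - a) * c] (mod n)"
    by (simp add: cong_def add.assoc)
  then show ?thesis using ab that by (simp add: S_def cong_add_lcancel_nat)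
qed

lemma circ_pow_ge_path:
  assumes c: "\<forall>s<n. 0 \<le> c s" and w: "w \<in> vecs n"
  shows "\<forall>l<k. s l < n \<Longrightarrow> i < n \<Longrightarrow>
    (\<Prod>l<k. c (s l)) * w ((i + (\<Sum>l<k. s l)) mod n) \<le> (circ_apply n c ^^ k) w i"
proof (induction k arbitrary: i s)
  case (Suc k)
  define j where "j = (i + s 0) mod n"
  have "j < n" using Suc.prems by (simp add: j_def)
  then have IH: "(\<Prod>l<k. c (s (Suc l))) * w ((j + (\<Sum>l<k. s (Suc l))) mod n) \<le> (circ_apply n c ^^ k) w j"
    using Suc.IH[of "\<lambda>l. s (Suc l)"] Suc.prems by auto
  have e: "(j + (\<Sum>l<k. s (Suc l))) mod n = (i + (s 0 + (\<Sum>l<k. s (Suc l)))) mod n"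
    unfolding j_def by (simp add: mod_add_left_eq add.assoc)
  have "(\<Prod>l<Suc k. c (s l)) * w ((i + (\<Sum>l<Suc k. s l)) mod n)
      = c (s 0) * ((\<Prod>l<k. c (s (Suc l))) * w ((j + (\<Sum>l<k. s (Suc l))) mod n))"
    unfolding prod.lessThan_Suc_shift sum.lessThan_Suc_shift e by simp
  also have "\<dots> \<le> c (s 0) * (circ_apply n c ^^ k) w j"
    using IH c Suc.prems by (intro mult_left_mono) auto
  also have "\<dots> \<le> (circ_apply n c ^^ Suc k) w i"
    using Suc.prems by (simp add: j_def circ_apply_ge)
  finally show ?case .
qed simp

lemma circ_pow_path_attained:
  "i < n \<Longrightarrow> \<exists>s. (\<forall>l<k. s l < n) \<and>
    (circ_apply n c ^^ k) w i = (\<Prod>l<k. c (s l)) * w ((i + (\<Sum>l<k. s l)) mod n)"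
proof (induction k arbitrary: i)
  case (Suc k)
  obtain u where u: "u < n" "circ_apply n c ((circ_apply n c ^^ k) w) i
      = c u * (circ_apply n c ^^ k) w ((i + u) mod n)"
    using Suc.prems by (rule circ_apply_attained)
  define j where "j = (i + u) mod n"
  have "j < n" using Suc.prems by (simp add: j_def)
  then obtain s where s: "\<forall>l<k. s l < n"
      "(circ_apply n c ^^ k) w j = (\<Prod>l<k. c (s l)) * w ((j + (\<Sum>l<k. s l)) mod n)"
    using Suc.IH by blast
  have e: "(j + (\<Sum>l<k. s l)) mod n = (i + (u + (\<Sum>l<k. s l))) mod n"
    unfolding j_def by (simp add: mod_add_left_eq add.assoc)
  have "\<forall>l<Suc k. case_nat u s l < n" using u s by (auto simp: less_Suc_eq_0_disj)
  moreover have "(circ_apply n c ^^ Suc k) w i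
      = (\<Prod>l<Suc k. c (case_nat u s l)) * w ((i + (\<Sum>l<Suc k. case_nat u s l)) mod n)"
    unfolding prod.lessThan_Suc_shift sum.lessThan_Suc_shift using u(2) s(2) e by (simp add: j_def)
  ultimately show ?case by blast
qed simp

text \<open>Cutting the segment \<open>[u, v)\<close> out of the path and prepending \<open>v - u\<close> steps by \<open>s\<^sub>0\<close>
  through \<open>a\<close> keeps the endpoint, and the segment weighs at most \<open>L\<^sup>v\<^sup>-\<^sup>u\<close>, the weight of
  the new steps.\<close>

lemma circ_path_le_shortcut:
  assumes n: "0 < n" and a: "\<forall>s<n. 0 \<le> a s" and d: "\<forall>s<n. 0 \<le> d s" and dL: "\<forall>s<n. d s \<le> L"
    and s0: "s0 < n" "a s0 = L" and L: "0 \<le> L" and z: "z \<in> vecs n" and i: "i < n"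
    and s: "\<forall>l<n. s l < n" and uv: "u < v" "v \<le> n"
    and cong: "[(\<Sum>l\<in>{u..<v}. s l) = (v - u) * s0] (mod n)"
  shows "(\<Prod>l<n. d (s l)) * z ((i + (\<Sum>l<n. s l)) mod n)
    \<le> (circ_apply n a ^^ (v - u)) ((circ_apply n d ^^ (n - (v - u))) z) i"
proof -
  define r where "r = v - u"
  define s' where "s' l = s (if l < u then l else l + r)" for l
  have s': "\<forall>l<n - r. s' l < n" using s uv by (auto simp: s'_def r_def)
  have prod_split: "(\<Prod>l<n. d (s l)) = (\<Prod>l\<in>{u..<v}. d (s l)) * (\<Prod>l<n - r. d (s' l))"
    unfolding s'_def r_def using uv by (intro prod.lessThan_remove_segment) auto
  have sum_split: "(\<Sum>l<n. s l) = (\<Sum>l\<in>{u..<v}. s l) + (\<Sum>l<n - r. s' l)"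
    unfolding s'_def r_def using uv by (intro sum.lessThan_remove_segment) auto
  have "(\<Prod>l\<in>{u..<v}. d (s l)) \<le> (\<Prod>l\<in>{u..<v}. L)"
    using s uv d dL by (intro prod_mono) auto
  then have seg: "(\<Prod>l\<in>{u..<v}. d (s l)) \<le> L ^ r" by (simp add: r_def)
  define j where "j = (i + r * s0) mod n"
  have j: "j < n" using n by (simp add: j_def)
  have "[j + (\<Sum>l<n - r. s' l) = i + r * s0 + (\<Sum>l<n - r. s' l)] (mod n)"
    unfolding j_def cong_def by (simp add: mod_add_left_eq)
  also have "[i + r * s0 + (\<Sum>l<n - r. s' l) = i + (\<Sum>l\<in>{u..<v}. s l) + (\<Sum>l<n - r. s' l)] (mod n)"
    using cong by (intro cong_add cong_refl) (simp add: r_def cong_sym_eq)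
  also have "i + (\<Sum>l\<in>{u..<v}. s l) + (\<Sum>l<n - r. s' l) = i + (\<Sum>l<n. s l)"
    by (simp add: sum_split)
  finally have endpoint: "z ((j + (\<Sum>l<n - r. s' l)) mod n) = z ((i + (\<Sum>l<n. s l)) mod n)"
    by (simp add: cong_def)
  define rest where "rest = (\<Prod>l<n - r. d (s' l)) * z ((i + (\<Sum>l<n. s l)) mod n)"
  have rest: "0 \<le> rest" unfolding rest_def using s' d z
    by (intro mult_nonneg_nonneg prod_nonneg) (auto simp: vecs_nonneg)
  have "(\<Prod>l<n. d (s l)) * z ((i + (\<Sum>l<n. s l)) mod n) = (\<Prod>l\<in>{u..<v}. d (s l)) * rest"
    by (simp add: prod_split rest_def)
  also have "\<dots> \<le> L ^ r * rest" using seg rest by (rule mult_right_mono)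
  also have "\<dots> \<le> L ^ r * (circ_apply n d ^^ (n - r)) z j"
    using circ_pow_ge_path[OF d z s' j] L endpoint by (intro mult_left_mono) (auto simp: rest_def)
  also have "\<dots> \<le> (circ_apply n a ^^ r) ((circ_apply n d ^^ (n - r)) z) i"
    using circ_pow_ge_path[OF a circ_pow_vecs[OF d z], of r "\<lambda>_. s0" i] s0 i by (simp add: j_def)
  finally show ?thesis by (simp add: r_def)
qed

lemma circ_pow_absorb_segment:
  assumes n: "0 < n" and a: "\<forall>s<n. 0 \<le> a s" and d: "\<forall>s<n. 0 \<le> d s" and dL: "\<forall>s<n. d s \<le> L"
    and s0: "s0 < n" "a s0 = L" and L: "0 \<le> L" and z: "z \<in> vecs n" and i: "i < n"
  shows "\<exists>r. 1 \<le> r \<and> r \<le> n \<and>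
    (circ_apply n a ^^ m) ((circ_apply n d ^^ n) z) i
      \<le> (circ_apply n a ^^ (r + m)) ((circ_apply n d ^^ (n - r)) z) i"
proof -
  define w where "w = (circ_apply n a ^^ m) z"
  have w: "w \<in> vecs n" unfolding w_def using a z by (rule circ_pow_vecs)
  obtain s where s: "\<forall>l<n. s l < n"
      "(circ_apply n d ^^ n) w i = (\<Prod>l<n. d (s l)) * w ((i + (\<Sum>l<n. s l)) mod n)"
    using circ_pow_path_attained[OF i] by blast
  obtain u v where uv: "u < v" "v \<le> n" and cong: "[(\<Sum>l\<in>{u..<v}. s l) = (v - u) * s0] (mod n)"
    using exists_segment_sum_cong[OF n s0(1)] by blast
  have "(circ_apply n a ^^ m) ((circ_apply n d ^^ n) z) i = (circ_apply n d ^^ n) w i"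
    unfolding w_def by (simp only: circ_pow_commute[OF a d z])
  also have "\<dots> \<le> (circ_apply n a ^^ (v - u)) ((circ_apply n d ^^ (n - (v - u))) w) i"
    unfolding s(2) by (rule circ_path_le_shortcut[OF n a d dL s0 L w i s(1) uv cong])
  also have "\<dots> = (circ_apply n a ^^ (v - u + m)) ((circ_apply n d ^^ (n - (v - u))) z) i"
    unfolding w_def by (simp only: circ_pow_commute[OF a d z] funpow_add o_apply)
  finally show ?thesis using uv by (intro exI[of _ "v - u"]) auto
qed

lemma circ_pow_reduce_power:
  assumes n: "0 < n" and a: "\<forall>s<n. 0 \<le> a s" and d: "\<forall>s<n. 0 \<le> d s" and dL: "\<forall>s<n. d s \<le> L"
    and s0: "s0 < n" "a s0 = L" and L: "0 \<le> L" and x: "x \<in> vecs n" and N: "T + n \<le> N"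
  shows "k \<le> N \<Longrightarrow> i < n \<Longrightarrow> \<exists>k'\<le>N - T.
    (circ_apply n a ^^ (N - k)) ((circ_apply n d ^^ k) x) i
      \<le> (circ_apply n a ^^ (N - k')) ((circ_apply n d ^^ k') x) i"
proof (induction k arbitrary: i rule: less_induct)
  case (less k)
  show ?case
  proof (cases "k \<le> N - T")
    case False
    then have kn: "n \<le> k" using N by linarith
    define z where "z = (circ_apply n d ^^ (k - n)) x"
    have z: "z \<in> vecs n" unfolding z_def using d x by (rule circ_pow_vecs)
    obtain r where r: "1 \<le> r" "r \<le> n"
        "(circ_apply n a ^^ (N - k)) ((circ_apply n d ^^ n) z) i
          \<le> (circ_apply n a ^^ (r + (N - k))) ((circ_apply n d ^^ (n - r)) z) i"
      using circ_pow_absorb_segment[OF n a d dL s0 L z less.prems(2)] by blast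
    have "k = n + (k - n)" "r + (N - k) = N - (k - r)" "k - r = (n - r) + (k - n)"
      using kn r less.prems by auto
    then have "(circ_apply n a ^^ (N - k)) ((circ_apply n d ^^ k) x) i
        \<le> (circ_apply n a ^^ (N - (k - r))) ((circ_apply n d ^^ (k - r)) x) i"
      using r(3) unfolding z_def by (metis comp_apply funpow_add)
    moreover obtain k' where "k' \<le> N - T" "(circ_apply n a ^^ (N - (k - r))) ((circ_apply n d ^^ (k - r)) x) i
        \<le> (circ_apply n a ^^ (N - k')) ((circ_apply n d ^^ k') x) i"
    proof -
      have "k - r < k" "k - r \<le> N" using r kn less.prems by auto
      then show ?thesis using less.IH[of "k - r" i] less.prems that by blast
    qed
    ultimately show ?thesis by (blast intro: order_trans)
  qed blast
qed

section \<open>Powers of \<open>B = A \<oplus> D\<close>\<close>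

lemma circ_pow_le_binomial:
  assumes a: "\<forall>s<n. 0 \<le> a s" and d: "\<forall>s<n. 0 \<le> d s" and b: "\<forall>s<n. 0 \<le> b s"
    and split: "\<forall>s<n. b s = a s \<or> b s = d s" and x: "x \<in> vecs n"
  shows "i < n \<Longrightarrow> \<exists>k\<le>t. (circ_apply n b ^^ t) x i \<le> (circ_apply n a ^^ (t - k)) ((circ_apply n d ^^ k) x) i"
proof (induction t arbitrary: i)
  case (Suc t)
  let ?m = "\<lambda>k. (circ_apply n a ^^ (t - k)) ((circ_apply n d ^^ k) x)"
  obtain s where s: "s < n" "circ_apply n b ((circ_apply n b ^^ t) x) i = b s * (circ_apply n b ^^ t) x ((i + s) mod n)"
    using Suc.prems by (rule circ_apply_attained)
  have "(i + s) mod n < n" using Suc.prems by simp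
  then obtain k where k: "k \<le> t" "(circ_apply n b ^^ t) x ((i + s) mod n) \<le> ?m k ((i + s) mod n)"
    using Suc.IH by blast
  have "(circ_apply n b ^^ Suc t) x i \<le> b s * ?m k ((i + s) mod n)"
    using s k b by (auto intro: mult_left_mono)
  moreover consider "b s = a s" | "b s = d s" using split s by blast
  then have "\<exists>k'\<le>Suc t. b s * ?m k ((i + s) mod n)
      \<le> (circ_apply n a ^^ (Suc t - k')) ((circ_apply n d ^^ k') x) i"
  proof cases
    case 1
    then have "b s * ?m k ((i + s) mod n) \<le> circ_apply n a (?m k) i"
      using circ_apply_ge[OF Suc.prems s(1)] by simp
    then show ?thesis using k(1) by (intro exI[of _ k]) (simp add: Suc_diff_le)
  next
    case 2
    then have "b s * ?m k ((i + s) mod n) \<le> circ_apply n d (?m k) i"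
      using circ_apply_ge[OF Suc.prems s(1)] by simp
    also have "\<dots> = (circ_apply n a ^^ (Suc t - Suc k)) ((circ_apply n d ^^ Suc k) x) i"
      using circ_pow_commute_apply[OF a d circ_pow_vecs[OF d x], of "t - k"] by simp
    finally show ?thesis using k(1) by (intro exI[of _ "Suc k"]) simp
  qed
  ultimately show ?case by (blast intro: order_trans)
qed simp

lemma circ_pow_ge_binomial:
  assumes a: "\<forall>s<n. 0 \<le> a s" and d: "\<forall>s<n. 0 \<le> d s"
    and ab: "\<forall>s<n. a s \<le> b s" and db: "\<forall>s<n. d s \<le> b s" and x: "x \<in> vecs n"
  shows "(circ_apply n a ^^ m) ((circ_apply n d ^^ k) x) i \<le> (circ_apply n b ^^ (m + k)) x i"
proof -
  have "(circ_apply n a ^^ m) ((circ_apply n d ^^ k) x) i \<le> (circ_apply n b ^^ m) ((circ_apply n b ^^ k) x) i"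
    using circ_pow_mono[OF d db _ x] db by (intro circ_pow_mono a ab circ_pow_vecs d x) auto
  then show ?thesis by (simp add: funpow_add)
qed

lemma circ_pow_eigen_stable:
  assumes L: "0 \<le> L" and a: "\<forall>s<n. 0 \<le> a s"
    and T: "(circ_apply n a ^^ Suc T) x = (\<lambda>i. L * (circ_apply n a ^^ T) x i)"
  shows "T \<le> m \<Longrightarrow> (circ_apply n a ^^ Suc m) x = (\<lambda>i. L * (circ_apply n a ^^ m) x i)"
proof (induction m rule: dec_induct)
  case (step m)
  then show ?case using circ_apply_scale[OF L a] by simp
qed (rule T)

lemma circ_pow_le_binomial_late:
  assumes n: "0 < n" and a: "\<forall>s<n. 0 \<le> a s" and d: "\<forall>s<n. 0 \<le> d s"
    and split: "\<forall>s<n. b s = a s \<or> b s = d s" and dL: "\<forall>s<n. d s \<le> L"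
    and s0: "s0 < n" "a s0 = L" and L: "0 \<le> L" and x: "x \<in> vecs n"
    and t: "T + n \<le> t" and i: "i < n"
  obtains k where "k \<le> t - T"
    "(circ_apply n b ^^ t) x i \<le> (circ_apply n a ^^ (t - k)) ((circ_apply n d ^^ k) x) i"
proof -
  have b: "\<forall>s<n. 0 \<le> b s" using a d split by metis
  obtain k where "k \<le> t" "(circ_apply n b ^^ t) x i \<le> (circ_apply n a ^^ (t - k)) ((circ_apply n d ^^ k) x) i"
    using circ_pow_le_binomial[OF a d b split x i] by blast
  moreover obtain k' where "k' \<le> t - T" "(circ_apply n a ^^ (t - k)) ((circ_apply n d ^^ k) x) i
      \<le> (circ_apply n a ^^ (t - k')) ((circ_apply n d ^^ k') x) i"
    using circ_pow_reduce_power[OF n a d dL s0 L x t \<open>k \<le> t\<close> i] by blast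
  ultimately show ?thesis using that by (blast intro: order_trans)
qed

context
  fixes n :: nat and a b d :: "nat \<Rightarrow> real" and L :: real and s0 T :: nat and x :: "nat \<Rightarrow> real"
  assumes n: "0 < n" and a: "\<forall>s<n. 0 \<le> a s" and d: "\<forall>s<n. 0 \<le> d s"
    and ab: "\<forall>s<n. a s \<le> b s" and db: "\<forall>s<n. d s \<le> b s" and split: "\<forall>s<n. b s = a s \<or> b s = d s"
    and dL: "\<forall>s<n. d s \<le> L" and s0: "s0 < n" "a s0 = L" and L: "0 \<le> L" and x: "x \<in> vecs n"
    and T: "(circ_apply n a ^^ Suc T) x = (\<lambda>i. L * (circ_apply n a ^^ T) x i)"
begin

lemma circ_pow_mixed_eigen:
  assumes "T \<le> m"
  shows "(circ_apply n a ^^ Suc m) ((circ_apply n d ^^ k) x) i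
    = L * (circ_apply n a ^^ m) ((circ_apply n d ^^ k) x) i"
proof -
  have "(circ_apply n a ^^ Suc m) ((circ_apply n d ^^ k) x) = (circ_apply n d ^^ k) ((circ_apply n a ^^ Suc m) x)"
    by (rule circ_pow_commute[OF a d x])
  also have "\<dots> = (circ_apply n d ^^ k) (\<lambda>i. L * (circ_apply n a ^^ m) x i)"
    using circ_pow_eigen_stable[OF L a T assms] by simp
  also have "\<dots> = (\<lambda>i. L * (circ_apply n d ^^ k) ((circ_apply n a ^^ m) x) i)"
    by (rule circ_pow_scale[OF L d])
  also have "\<dots> = (\<lambda>i. L * (circ_apply n a ^^ m) ((circ_apply n d ^^ k) x) i)"
    by (simp only: circ_pow_commute[OF a d x])
  finally show ?thesis by simp
qed

lemma circ_pow_late_ge_eigen: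
  assumes t: "T + n \<le> t" and i: "i < n"
  shows "L * (circ_apply n b ^^ t) x i \<le> (circ_apply n b ^^ Suc t) x i"
proof -
  obtain k where k: "k \<le> t - T"
      "(circ_apply n b ^^ t) x i \<le> (circ_apply n a ^^ (t - k)) ((circ_apply n d ^^ k) x) i"
    using circ_pow_le_binomial_late[OF n a d split dL s0 L x t i] by blast
  have "L * (circ_apply n b ^^ t) x i \<le> L * (circ_apply n a ^^ (t - k)) ((circ_apply n d ^^ k) x) i"
    using k(2) L by (rule mult_left_mono)
  also have "\<dots> = (circ_apply n a ^^ Suc (t - k)) ((circ_apply n d ^^ k) x) i"
    using k t by (intro circ_pow_mixed_eigen[symmetric]) simp
  also have "\<dots> \<le> (circ_apply n b ^^ Suc t) x i"
    using circ_pow_ge_binomial[OF a d ab db x, of "Suc (t - k)" k i] k t by simp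
  finally show ?thesis .
qed

lemma circ_pow_late_le_eigen:
  assumes t: "T + n \<le> t" and i: "i < n"
  shows "(circ_apply n b ^^ Suc t) x i \<le> L * (circ_apply n b ^^ t) x i"
proof -
  obtain k where k: "k \<le> Suc t - Suc T"
      "(circ_apply n b ^^ Suc t) x i \<le> (circ_apply n a ^^ (Suc t - k)) ((circ_apply n d ^^ k) x) i"
    using circ_pow_le_binomial_late[OF n a d split dL s0 L x, of "Suc T" "Suc t" i] t i by auto
  have "Suc t - k = Suc (t - k)" "T \<le> t - k" using k t by auto
  then have "(circ_apply n a ^^ (Suc t - k)) ((circ_apply n d ^^ k) x) i
      = L * (circ_apply n a ^^ (t - k)) ((circ_apply n d ^^ k) x) i"
    using circ_pow_mixed_eigen by simp
  also have "\<dots> \<le> L * (circ_apply n b ^^ t) x i"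
    using circ_pow_ge_binomial[OF a d ab db x, of "t - k" k i] k t L by (intro mult_left_mono) simp_all
  finally show ?thesis using k(2) by simp
qed

end

lemma circ_pow_eventually_eigen:
  assumes n: "0 < n" and a: "\<forall>s<n. 0 \<le> a s" and ab: "\<forall>s<n. a s \<le> b s"
    and bL: "\<forall>s<n. b s \<le> L" and s0: "s0 < n" "a s0 = L" and L: "0 \<le> L" and x: "x \<in> vecs n"
    and T: "(circ_apply n a ^^ Suc T) x = (\<lambda>i. L * (circ_apply n a ^^ T) x i)"
  shows "(circ_apply n b ^^ Suc (T + n)) x = (\<lambda>i. L * (circ_apply n b ^^ (T + n)) x i)"
proof
  fix i
  define d where "d s = (if a s = b s then 0 else b s)" for s
  have d: "\<forall>s<n. 0 \<le> d s" and db: "\<forall>s<n. d s \<le> b s" and dL: "\<forall>s<n. d s \<le> L"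
    and split: "\<forall>s<n. b s = a s \<or> b s = d s"
    using a ab bL L by (auto simp: d_def intro: order_trans)
  note bounds = circ_pow_late_ge_eigen[OF n a d ab db split dL s0 L x T order_refl]
    circ_pow_late_le_eigen[OF n a d ab db split dL s0 L x T order_refl]
  show "(circ_apply n b ^^ Suc (T + n)) x i = L * (circ_apply n b ^^ (T + n)) x i"
  proof (cases "i < n")
    case True
    then show ?thesis using bounds by (blast intro: antisym)
  next
    case False
    have b: "\<forall>s<n. 0 \<le> b s" using a ab by (auto intro: order_trans)
    then show ?thesis using False vecs_outside[OF circ_pow_vecs[OF b x] False] by (simp add: circ_apply_outside)
  qed
qed

section \<open>Circulant matrices\<close>

lemma mvec_ge: "i < n \<Longrightarrow> j < n \<Longrightarrow> A i j * x j \<le> mvec n A x i"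
  unfolding mvec_def by (auto intro: Max_ge)

lemma mvec_attained:
  assumes "i < n"
  obtains j where "j < n" "mvec n A x i = A i j * x j"
proof -
  have "Max ((\<lambda>j. A i j * x j) ` {..<n}) \<in> (\<lambda>j. A i j * x j) ` {..<n}"
    using assms by (intro Max_in) auto
  then show ?thesis using assms that unfolding mvec_def by auto
qed

lemma mmult_ge: "i < n \<Longrightarrow> j < n \<Longrightarrow> k < n \<Longrightarrow> A i j * M j k \<le> mmult n A M i k"
  unfolding mmult_def by (auto intro: Max_ge)

lemma mmult_attained:
  assumes "i < n" "k < n"
  obtains j where "j < n" "mmult n A M i k = A i j * M j k"
proof -
  have "Max ((\<lambda>j. A i j * M j k) ` {..<n}) \<in> (\<lambda>j. A i j * M j k) ` {..<n}"
    using assms by (intro Max_in) auto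
  then show ?thesis using assms that unfolding mmult_def by auto
qed

lemma mvec_mid: "x \<in> vecs n \<Longrightarrow> mvec n (mid n) x = x"
proof
  fix i assume x: "x \<in> vecs n"
  show "mvec n (mid n) x i = x i"
  proof (cases "i < n")
    case True
    then obtain j where "j < n" "mvec n (mid n) x i = mid n i j * x j" by (rule mvec_attained)
    then have "mvec n (mid n) x i \<le> x i" using x by (auto simp: mid_def vecs_nonneg)
    moreover have "x i \<le> mvec n (mid n) x i" using mvec_ge[OF True True, of "mid n" x] True
      by (simp add: mid_def)
    ultimately show ?thesis by simp
  qed (simp add: mvec_def vecs_outside[OF x])
qed

lemma mpow_nonneg:
  assumes "nonneg_mat n A"
  shows "nonneg_mat n (mpow n A t)"
proof (induction t)
  case (Suc t)
  show ?case unfolding nonneg_mat_def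
  proof (intro allI impI)
    fix i k assume ik: "i < n" "k < n"
    then obtain j where "j < n" "mpow n A (Suc t) i k = A i j * mpow n A t j k"
      by (auto elim: mmult_attained)
    then show "0 \<le> mpow n A (Suc t) i k"
      using assms Suc ik by (simp add: nonneg_mat_def)
  qed
qed (simp add: nonneg_mat_def mid_def)

lemma mvec_mmult:
  assumes A: "nonneg_mat n A" and M: "nonneg_mat n M" and x: "x \<in> vecs n"
  shows "mvec n (mmult n A M) x = mvec n A (mvec n M x)"
proof
  fix i show "mvec n (mmult n A M) x i = mvec n A (mvec n M x) i"
  proof (cases "i < n")
    case i: True
    obtain k where k: "k < n" "mvec n (mmult n A M) x i = mmult n A M i k * x k"
      using i by (rule mvec_attained)
    obtain j where j: "j < n" "mmult n A M i k = A i j * M j k"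
      using i k(1) by (rule mmult_attained)
    have "mvec n (mmult n A M) x i = A i j * (M j k * x k)" using k j by simp
    also have "\<dots> \<le> A i j * mvec n M x j"
      using A i j k by (intro mult_left_mono mvec_ge) (auto simp: nonneg_mat_def)
    also have "\<dots> \<le> mvec n A (mvec n M x) i" by (rule mvec_ge[OF i j(1)])
    finally have le: "mvec n (mmult n A M) x i \<le> mvec n A (mvec n M x) i" .
    obtain j' where j': "j' < n" "mvec n A (mvec n M x) i = A i j' * mvec n M x j'"
      using i by (rule mvec_attained)
    obtain k' where k': "k' < n" "mvec n M x j' = M j' k' * x k'"
      using j'(1) by (rule mvec_attained)
    have "mvec n A (mvec n M x) i = (A i j' * M j' k') * x k'" using j' k' by simp
    also have "\<dots> \<le> mmult n A M i k' * x k'"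
      using x i j' k' by (intro mult_right_mono mmult_ge) (auto simp: vecs_nonneg)
    also have "\<dots> \<le> mvec n (mmult n A M) x i" by (rule mvec_ge[OF i k'(1)])
    finally show ?thesis using le by simp
  qed (simp add: mvec_def)
qed

lemma circulant_entry:
  assumes "circulant n A" "i < n" "s < n"
  shows "A i ((i + s) mod n) = A 0 s"
proof -
  obtain a where a: "\<forall>i<n. \<forall>j<n. \<forall>t<n. int t mod int n = (int j - int i) mod int n \<longrightarrow> A i j = a t"
    using assms(1) unfolding circulant_def by blast
  have "int s mod int n = (int ((i + s) mod n) - int i) mod int n"
    by (simp add: zmod_int mod_diff_left_eq)
  then show ?thesis using a assms by auto
qed

lemma mvec_circulant:
  assumes A: "circulant n A"
  shows "mvec n A z = circ_apply n (A 0) z"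
proof
  fix i show "mvec n A z i = circ_apply n (A 0) z i"
  proof (cases "i < n")
    case i: True
    obtain j where j: "j < n" "mvec n A z i = A i j * z j" using i by (rule mvec_attained)
    define s where "s = (j + n - i) mod n"
    have "(i + s) mod n = (i + (j + n - i)) mod n" by (simp add: s_def mod_add_right_eq)
    then have s: "s < n" "(i + s) mod n = j" using i j by (auto simp: s_def)
    have "mvec n A z i \<le> circ_apply n (A 0) z i"
      using j circ_apply_ge[OF i s(1), of "A 0" z] circulant_entry[OF A i s(1)] s(2) by simp
    moreover obtain u where u: "u < n" "circ_apply n (A 0) z i = A 0 u * z ((i + u) mod n)"
      using i by (rule circ_apply_attained)
    have "circ_apply n (A 0) z i \<le> mvec n A z i"
      using u mvec_ge[OF i, of "(i + u) mod n" A z] circulant_entry[OF A i u(1)] i by simp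
    ultimately show ?thesis by simp
  qed (simp add: mvec_def circ_apply_outside)
qed

lemma mvec_mpow_circulant:
  assumes A: "nonneg_mat n A" "circulant n A" and x: "x \<in> vecs n"
  shows "mvec n (mpow n A t) x = (circ_apply n (A 0) ^^ t) x"
proof (induction t)
  case (Suc t)
  then show ?case
    using mvec_mmult[OF A(1) mpow_nonneg[OF A(1)] x] by (simp add: mvec_circulant[OF A(2)])
qed (simp add: mvec_mid[OF x])

lemma nonneg_mat_Max_row_nonneg: "i < n \<Longrightarrow> nonneg_mat n A \<Longrightarrow> 0 \<le> Max (A i ` {..<n})"
  by (rule order_trans[of _ "A i 0"]) (auto simp: nonneg_mat_def intro: Max_ge)

lemma is_eigenvalue_circulant_Max:
  assumes n: "0 < n" and A: "nonneg_mat n A" "circulant n A"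
  shows "is_eigenvalue n A (Max (A 0 ` {..<n}))"
proof -
  define m where "m = Max (A 0 ` {..<n})"
  have m0: "0 \<le> m" unfolding m_def using n A(1) by (rule nonneg_mat_Max_row_nonneg)
  define e where "e i = (if i < n then 1 else 0 :: real)" for i
  have "circ_apply n (A 0) e = (\<lambda>i. m * e i)"
  proof
    fix i show "circ_apply n (A 0) e i = m * e i"
    proof (cases "i < n")
      case True
      have "(\<lambda>s. A 0 s * e ((i + s) mod n)) ` {..<n} = A 0 ` {..<n}"
        using n by (intro image_cong) (auto simp: e_def)
      then show ?thesis using True by (simp add: circ_apply_def m_def e_def)
    qed (simp add: circ_apply_outside e_def)
  qed
  then have "e \<in> eigencone n A m"
    by (auto simp: eigencone_def vecs_def e_def mvec_circulant[OF A(2)])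
  then show ?thesis unfolding is_eigenvalue_def m_def[symmetric]
    using m0 n by (intro conjI bexI[of _ e]) (auto simp: e_def)
qed

lemma eigenvalue_circulant_le_Max:
  assumes n: "0 < n" and A: "nonneg_mat n A" "circulant n A" and l: "is_eigenvalue n A l"
  shows "l \<le> Max (A 0 ` {..<n})"
proof -
  obtain x i where x: "x \<in> vecs n" "circ_apply n (A 0) x = (\<lambda>i. l * x i)" and i: "i < n" "x i \<noteq> 0"
    using l by (auto simp: is_eigenvalue_def eigencone_def mvec_circulant[OF A(2)])
  have "Max (x ` {..<n}) \<in> x ` {..<n}" using n by (intro Max_in) auto
  then obtain i0 where i0: "i0 < n" "x i0 = Max (x ` {..<n})" by auto
  have x_le: "j < n \<Longrightarrow> x j \<le> x i0" for j using i0 by (auto intro: Max_ge)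
  have "0 < x i0" using x_le[OF i(1)] i vecs_nonneg[OF x(1), of i] by linarith
  obtain s where s: "s < n" "circ_apply n (A 0) x i0 = A 0 s * x ((i0 + s) mod n)"
    using i0(1) by (rule circ_apply_attained)
  have "l * x i0 = A 0 s * x ((i0 + s) mod n)" using s x(2) by metis
  also have "\<dots> \<le> Max (A 0 ` {..<n}) * x i0"
    using x_le[of "(i0 + s) mod n"] n A s(1) x(1) nonneg_mat_Max_row_nonneg[OF n A(1)]
    by (intro mult_mono) (auto simp: vecs_nonneg intro: Max_ge)
  finally show ?thesis using \<open>0 < x i0\<close> by simp
qed

lemma lam_circulant:
  assumes "0 < n" "nonneg_mat n A" "circulant n A"
  shows "lam n A = Max (A 0 ` {..<n})"
  unfolding lam_def
  using is_eigenvalue_circulant_Max[OF assms] eigenvalue_circulant_le_Max[OF assms]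
  by (rule Greatest_equality)

lemma eigencone_mpow_circulant:
  assumes A: "nonneg_mat n A" "circulant n A" and x: "x \<in> vecs n"
  shows "mvec n (mpow n A t) x \<in> eigencone n A l \<longleftrightarrow>
    (circ_apply n (A 0) ^^ Suc t) x = (\<lambda>i. l * (circ_apply n (A 0) ^^ t) x i)"
proof -
  have "\<forall>s<n. 0 \<le> A 0 s" using A(1) by (auto simp: nonneg_mat_def)
  then have "(circ_apply n (A 0) ^^ t) x \<in> vecs n" using x by (rule circ_pow_vecs)
  then show ?thesis
    by (simp add: eigencone_def mvec_mpow_circulant[OF A x] mvec_circulant[OF A(2)])
qed

theorem theorem3:
  fixes n :: nat and A B :: "nat \<Rightarrow> nat \<Rightarrow> real"
  assumes "0 < n"
    and "nonneg_mat n A" and "nonneg_mat n B"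
    and "circulant n A" and "circulant n B"
    and "lam n A = lam n B"
    and "\<forall>i<n. \<forall>j<n. A i j \<le> B i j"
  shows "Attr n A \<subseteq> Attr n B"
proof
  fix x assume "x \<in> Attr n A"
  then obtain T where x: "x \<in> vecs n" and "mvec n (mpow n A T) x \<in> eigencone n A (lam n A)"
    by (auto simp: Attr_def)
  then have T: "(circ_apply n (A 0) ^^ Suc T) x = (\<lambda>i. lam n A * (circ_apply n (A 0) ^^ T) x i)"
    using eigencone_mpow_circulant[OF assms(2,4) x] by simp
  have a: "\<forall>s<n. 0 \<le> A 0 s" and ab: "\<forall>s<n. A 0 s \<le> B 0 s"
    using assms by (auto simp: nonneg_mat_def)
  have "lam n A \<in> A 0 ` {..<n}"
    unfolding lam_circulant[OF assms(1,2,4)] using \<open>0 < n\<close> by (intro Max_in) auto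
  then obtain s0 where s0: "s0 < n" "A 0 s0 = lam n A" by auto
  have bL: "\<forall>s<n. B 0 s \<le> lam n A"
    using lam_circulant[OF assms(1,3,5)] assms(6) by (auto intro: Max_ge)
  have "0 \<le> lam n A" using a s0 by auto
  from circ_pow_eventually_eigen[OF \<open>0 < n\<close> a ab bL s0 this x T]
  have "mvec n (mpow n B (T + n)) x \<in> eigencone n B (lam n B)"
    using eigencone_mpow_circulant[OF assms(3,5) x] assms(6) by simp
  with x show "x \<in> Attr n B" by (auto simp: Attr_def)
qed

end
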